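(* Let $\mathbb{R}^n_s$ be $\mathbb{R}^n$ with a non-degenerate symmetric bilinear form of signature $(n-s,s)$, and let $G\subset\mathrm{Iso}(\mathbb{R}^n_s)$ be a real Zariski-closed subgroup whose centralizer in $\mathrm{Iso}(\mathbb{R}^n_s)$ acts transitively on $\mathbb{R}^n$. Fix $p\in\mathbb{R}^n$; the orbit $F_p=G.p$ is an affine subspace of $\mathbb{R}^n$ and the orbit map $\theta:G\to F_p$, $g\mapsto g.p$, is a diffeomorphism; let $\nabla$ be the flat affine connection on $G$ obtained by pulling back the natural affine connection of $F_p$ via $\theta$. Then $\nabla$ coincides with the (0)-connection $\tilde\nabla$ on $G$.
   Context: The (0)-connection on the Lie group $G$ is the left-invariant affine connection $\tilde\nabla$ determined by $\tilde\nabla_XY=\frac12[X,Y]$ for left-invariant vector fields $X,Y$; for this $G$ (which is 2-step nilpotent with $XY=\frac12[X,Y]$ in matrices for $X,Y$ in its Lie algebra) one has $(\tilde\nabla_XY)_g=gX_IY_I$, where $X_I,Y_I$ are the values at the identity. Elements of $\mathrm{Iso}(\mathbb{R}^n_s)$ are affine maps $(I+A,v)$ identified with matrices $\begin{pmatrix}I+A&v\\0&1\end{pmatrix}\in\mathrm{GL}_{n+1}(\mathbb{R})$. *)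

theory Defs
  imports "HOL-Analysis.Analysis"
begin

text \<open>
  An element of Iso(R^n_s), i.e. the block matrix
  [[M, v],[0, 1]] in GL_{n+1}(R), is represented by the pair (M, v).
  A tangent vector to Iso(R^n_s) (an element of the affine slice direction,
  i.e. a block matrix [[X, w],[0, 0]]) is represented by the pair (X, w).
\<close>

type_synonym 'n amat = "(real^'n^'n) \<times> (real^'n)"

definition nondeg_sym_form :: "real^('n::finite)^'n \<Rightarrow> bool" where
  "nondeg_sym_form B \<longleftrightarrow> transpose B = B \<and> invertible B"

definition Iso :: "real^('n::finite)^'n \<Rightarrow> ('n::finite) amat set" where
  "Iso B = {(M, v). transpose M ** B ** M = B}"

definition gmul :: "('n::finite) amat \<Rightarrow> ('n::finite) amat \<Rightarrow> ('n::finite) amat" where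
  "gmul g h = (fst g ** fst h, fst g *v snd h + snd g)"

definition gone :: "('n::finite) amat" where
  "gone = (mat 1, 0)"

definition ginv :: "('n::finite) amat \<Rightarrow> ('n::finite) amat" where
  "ginv g = (matrix_inv (fst g), - (matrix_inv (fst g) *v snd g))"

definition act :: "('n::finite) amat \<Rightarrow> real^('n::finite) \<Rightarrow> real^'n" where
  "act g x = fst g *v x + snd g"

text \<open>Matrix product [[M,v],[0,1]] * [[X,w],[0,0]] (left translation of tangent vectors).\<close>
definition lmul :: "('n::finite) amat \<Rightarrow> ('n::finite) amat \<Rightarrow> ('n::finite) amat" where
  "lmul g Z = (fst g ** fst Z, fst g *v snd Z)"

text \<open>Matrix product of two tangent-type block matrices [[X1,w1],[0,0]] [[X2,w2],[0,0]].\<close>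
definition tprod :: "('n::finite) amat \<Rightarrow> ('n::finite) amat \<Rightarrow> ('n::finite) amat" where
  "tprod Z1 Z2 = (fst Z1 ** fst Z2, fst Z1 *v snd Z2)"

definition bracket :: "('n::finite) amat \<Rightarrow> ('n::finite) amat \<Rightarrow> ('n::finite) amat" where
  "bracket Z1 Z2 = tprod Z1 Z2 - tprod Z2 Z1"

inductive poly_fun :: "('a::euclidean_space \<Rightarrow> real) \<Rightarrow> bool" where
  pf_const: "poly_fun (\<lambda>x. c)"
| pf_coord: "b \<in> Basis \<Longrightarrow> poly_fun (\<lambda>x. x \<bullet> b)"
| pf_add: "poly_fun f \<Longrightarrow> poly_fun g \<Longrightarrow> poly_fun (\<lambda>x. f x + g x)"
| pf_mult: "poly_fun f \<Longrightarrow> poly_fun g \<Longrightarrow> poly_fun (\<lambda>x. f x * g x)"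

definition zariski_closed_in_Iso :: "real^('n::finite)^'n \<Rightarrow> ('n::finite) amat set \<Rightarrow> bool" where
  "zariski_closed_in_Iso B G \<longleftrightarrow>
     (\<exists>S. (\<forall>f\<in>S. poly_fun f) \<and> G = {g \<in> Iso B. \<forall>f\<in>S. f g = 0})"

definition subgroup_Iso :: "real^('n::finite)^'n \<Rightarrow> ('n::finite) amat set \<Rightarrow> bool" where
  "subgroup_Iso B G \<longleftrightarrow> G \<subseteq> Iso B \<and> gone \<in> G \<and>
     (\<forall>g\<in>G. \<forall>h\<in>G. gmul g h \<in> G) \<and> (\<forall>g\<in>G. ginv g \<in> G)"

definition centralizer_transitive :: "real^('n::finite)^'n \<Rightarrow> ('n::finite) amat set \<Rightarrow> bool" where
  "centralizer_transitive B G \<longleftrightarrow>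
     (\<forall>x y. \<exists>h\<in>Iso B. (\<forall>g\<in>G. gmul h g = gmul g h) \<and> act h x = y)"

definition TG :: "('n::finite) amat set \<Rightarrow> ('n::finite) amat \<Rightarrow> ('n::finite) amat set" where
  "TG G g = {Z. \<exists>\<gamma>::real \<Rightarrow> ('n::finite) amat. (\<forall>t. \<gamma> t \<in> G) \<and> \<gamma> 0 = g \<and>
                 (\<gamma> has_vector_derivative Z) (at 0)}"

definition vector_field :: "('n::finite) amat set \<Rightarrow> (('n::finite) amat \<Rightarrow> ('n::finite) amat) \<Rightarrow> bool" where
  "vector_field G Y \<longleftrightarrow> (\<forall>g\<in>G. Y differentiable (at g) \<and> Y g \<in> TG G g)"

text \<open>Orbit F_p = G.p, orbit map \<theta>, its differential (\<theta> is the restriction of an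
  affine map of the ambient space, whose linear part is thlin) and its inverse.\<close>
definition orbit :: "('n::finite) amat set \<Rightarrow> real^('n::finite) \<Rightarrow> (real^'n) set" where
  "orbit G p = (\<lambda>g. act g p) ` G"

definition thlin :: "real^('n::finite) \<Rightarrow> ('n::finite) amat \<Rightarrow> real^'n" where
  "thlin p Z = fst Z *v p + snd Z"

definition thinv :: "('n::finite) amat set \<Rightarrow> real^('n::finite) \<Rightarrow> real^('n::finite) \<Rightarrow> ('n::finite) amat" where
  "thinv G p q = (THE g. g \<in> G \<and> act g p = q)"

text \<open>Pull-back via \<theta> of the natural flat affine connection D of the affine space F_p:
  (\<nabla>_X Y)(g) = d\<theta>_g^{-1} ( D_{d\<theta>(X g)} (\<theta>_* Y) (\<theta> g) ), with
  D_v W (q) = d/dt W(q + t v) at t = 0.\<close>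
definition nabla_pull :: "('n::finite) amat set \<Rightarrow> real^('n::finite) \<Rightarrow> (('n::finite) amat \<Rightarrow> ('n::finite) amat) \<Rightarrow>
    (('n::finite) amat \<Rightarrow> ('n::finite) amat) \<Rightarrow> ('n::finite) amat \<Rightarrow> ('n::finite) amat" where
  "nabla_pull G p X Y g =
     (THE Z. Z \<in> TG G g \<and>
        thlin p Z = vector_derivative
          (\<lambda>t. thlin p (Y (thinv G p (act g p + t *\<^sub>R thlin p (X g))))) (at 0))"

text \<open>The (0)-connection: the left-invariant affine connection with
  \<nabla>_X Y = 1/2 [X,Y] on left-invariant fields.  Writing an arbitrary field as
  Y(h) = h y(h) with y(h) = h^{-1} Y(h) in the Lie algebra, the affine-connection
  axioms give (\<nabla>_X Y)(g) = g (X_g(y) + 1/2 [x(g), y(g)]).\<close>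
definition nabla0 :: "(('n::finite) amat \<Rightarrow> ('n::finite) amat) \<Rightarrow> (('n::finite) amat \<Rightarrow> ('n::finite) amat) \<Rightarrow> ('n::finite) amat \<Rightarrow> ('n::finite) amat" where
  "nabla0 X Y g =
     lmul g (frechet_derivative (\<lambda>h. lmul (ginv h) (Y h)) (at g) (X g)
             + (1/2) *\<^sub>R bracket (lmul (ginv g) (X g)) (lmul (ginv g) (Y g)))"

end

theory Submission
  imports Defs
begin

text \<open>
  Write elements of \<open>G\<close> as \<open>1 + N\<close>. The centralizer of \<open>G\<close> consists of isometries and acts
  transitively, and it commutes with the displacement \<open>x \<mapsto> g.x - x\<close> of every \<open>g \<in> G\<close>;
  hence the displacement has constant length. For an isometry \<open>1 + N\<close> this forces \<open>N\<^sup>2 = 0\<close>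
  (in the affine sense). Then \<open>(1 + N)\<^sup>k = 1 + k N\<close>, and Zariski closedness puts the whole
  line \<open>1 + t N\<close> into \<open>G\<close>. Combined with the group law, the set \<open>\<g> = G - 1\<close> is a linear
  space closed under products in which products anticommute and triple products vanish.

  Consequently \<open>G = 1 + \<g>\<close> is an affine subspace, the orbit map is the restriction of an affine
  map, and it is injective because an element fixing one point fixes all points (transitivity of
  the centralizer again). The pulled-back flat connection is therefore the ordinary directional
  derivative. On the other side, \<open>(1 + N)\<^sup>-\<^sup>1 = 1 - N\<close> makes the (0)-connection explicit, and
  the 2-step nilpotency of \<open>\<g>\<close> cancels the bracket term against the derivative of \<open>h\<^sup>-\<^sup>1\<close>,
  leaving the same directional derivative.
\<close>

section \<open>Block matrix products\<close>

lemma matrix_add_rdistrib: "((A::'a::semiring_1^'n^'m) + B) ** C = A ** C + B ** C"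
  by (vector matrix_matrix_mult_def sum.distrib field_simps)

lemma bounded_bilinear_matrix_mult:
  "bounded_bilinear ((**) :: real^'n::finite^'m::finite \<Rightarrow> real^'p::finite^'n \<Rightarrow> real^'p^'m)"
  by (simp add: bilinear_conv_bounded_bilinear[symmetric] bilinear_def linear_iff
      matrix_add_ldistrib matrix_add_rdistrib matrix_scalar_ac scalar_matrix_assoc)

lemma bounded_bilinear_matrix_vector_mult:
  "bounded_bilinear ((*v) :: real^'n::finite^'m::finite \<Rightarrow> real^'n \<Rightarrow> real^'m)"
  by (simp add: bilinear_conv_bounded_bilinear[symmetric] bilinear_def linear_iff
      algebra_simps scaleR_matrix_vector_assoc)

interpretation matrix_mult: bounded_bilinear
  "(**) :: real^'n::finite^'m::finite \<Rightarrow> real^'p::finite^'n \<Rightarrow> real^'p^'m"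
  by (rule bounded_bilinear_matrix_mult)

interpretation matrix_vector_mult: bounded_bilinear
  "(*v) :: real^'n::finite^'m::finite \<Rightarrow> real^'n \<Rightarrow> real^'m"
  by (rule bounded_bilinear_matrix_vector_mult)

lemma bounded_bilinear_tprod: "bounded_bilinear (tprod :: 'n::finite amat \<Rightarrow> _)"
  by (simp add: bilinear_conv_bounded_bilinear[symmetric] bilinear_def linear_iff tprod_def
      matrix_mult.add_left matrix_mult.add_right matrix_mult.scaleR_left matrix_mult.scaleR_right
      matrix_vector_mult.add_left matrix_vector_mult.add_right
      matrix_vector_mult.scaleR_left matrix_vector_mult.scaleR_right)

interpretation tprod: bounded_bilinear "tprod :: 'n::finite amat \<Rightarrow> _"
  by (rule bounded_bilinear_tprod)

lemmas tprod_zero [simp] = tprod.zero_left tprod.zero_right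

lemma tprod_assoc: "tprod (tprod a b) c = tprod a (tprod b c)"
  by (simp add: tprod_def matrix_mul_assoc matrix_vector_mul_assoc)

lemma tprod_gone [simp]: "tprod gone c = c"
  by (simp add: tprod_def gone_def)

lemma lmul_eq_tprod: "lmul = tprod"
  by (simp add: fun_eq_iff lmul_def tprod_def)

lemma tprod_self_eq_0_iff: "tprod Z Z = 0 \<longleftrightarrow> fst Z ** fst Z = 0 \<and> fst Z *v snd Z = 0"
  by (simp add: tprod_def zero_prod_def)

section \<open>The bilinear form\<close>

definition bform :: "real^'n::finite^'n \<Rightarrow> real^'n \<Rightarrow> real^'n \<Rightarrow> real" where
  "bform B x y = x \<bullet> (B *v y)"

lemma bounded_bilinear_bform: "bounded_bilinear (bform B)"
  by (simp add: bilinear_conv_bounded_bilinear[symmetric] bilinear_def linear_iff bform_def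
      inner_add_left inner_add_right matrix_vector_mult.add_right
      matrix_vector_mult.scaleR_right)

interpretation bform: bounded_bilinear "bform B" for B
  by (rule bounded_bilinear_bform)

lemma bform_isometry:
  assumes "transpose M ** B ** M = B"
  shows "bform B (M *v x) (M *v y) = bform B x y"
proof -
  have "bform B (M *v x) (M *v y) = x \<bullet> ((transpose M ** B ** M) *v y)"
    unfolding bform_def vector_transpose_matrix[symmetric, of M x] dot_lmul_matrix
    by (simp add: matrix_vector_mul_assoc matrix_mul_assoc)
  then show ?thesis
    using assms by (simp add: bform_def)
qed

lemma bform_sym: "transpose B = B \<Longrightarrow> bform B x y = bform B y x"
  by (metis bform_def dot_lmul_matrix inner_commute transpose_matrix_vector)

lemma bform_nondegenerate:
  assumes "invertible B" and "\<And>y. bform B z y = 0"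
  shows "z = 0"
proof -
  obtain B' where "B ** B' = mat 1"
    using assms(1) invertible_def by blast
  then have "bform B z (B' *v z) = z \<bullet> z"
    by (simp add: bform_def matrix_vector_mul_assoc)
  then show ?thesis
    using assms(2) by simp
qed

lemma isometry_constant_displacement_square_zero:
  fixes A :: "real^'n::finite^'n"
  assumes B: "nondeg_sym_form B"
    and iso: "transpose (mat 1 + A) ** B ** (mat 1 + A) = B"
    and const: "\<And>x. bform B (A *v x + v) (A *v x + v) = bform B v v"
  shows "A ** A = 0" and "A *v v = 0"
proof -
  txt \<open>Constant displacement length makes the image of \<open>A\<close> totally isotropic and orthogonal
    to \<open>v\<close>; the isometry condition makes \<open>A\<close> skew, so \<open>A\<^sup>2 x\<close> and \<open>A v\<close> pair to zero with
    every vector.\<close>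
  have sym: "bform B x y = bform B y x" for x y
    using B bform_sym nondeg_sym_form_def by blast
  have nondeg: "z = 0" if "\<And>y. bform B z y = 0" for z
    using B bform_nondegenerate nondeg_sym_form_def that by blast
  have expand: "bform B (A *v x) (A *v x) + 2 * bform B (A *v x) v = 0" for x
    using const[of x] by (simp add: bform.add_left bform.add_right sym[of v "A *v x"])
  have null: "bform B (A *v x) (A *v x) = 0" and perp: "bform B (A *v x) v = 0" for x
    using expand[of x] expand[of "- x"]
    by (simp_all add: matrix_vector_mult.minus_right bform.minus_left bform.minus_right)
  have totally_null: "bform B (A *v x) (A *v y) = 0" for x y
    using null[of "x + y"] null[of x] null[of y]
    by (simp add: matrix_vector_mult.add_right bform.add_left bform.add_right sym[of "A *v y" "A *v x"])
  have skew: "bform B (A *v x) y = - bform B x (A *v y)" for x y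
    using bform_isometry[OF iso, of x y] totally_null[of x y]
    by (simp add: matrix_vector_mult_add_rdistrib bform.add_left bform.add_right)
  have "A *v (A *v x) = 0" for x
    by (rule nondeg) (use skew totally_null in \<open>metis neg_equal_0_iff_equal\<close>)
  then show "A ** A = 0"
    by (simp add: matrix_eq matrix_vector_mul_assoc)
  show "A *v v = 0"
    by (rule nondeg) (use skew sym perp in metis)
qed

section \<open>The affine action and the centralizer\<close>

lemma act_gmul: "act (gmul g h) x = act g (act h x)"
  by (simp add: act_def gmul_def matrix_vector_mul_assoc matrix_vector_right_distrib add.assoc)

lemma act_add: "act (g + Z) x = act g x + thlin x Z"
  by (simp add: act_def thlin_def matrix_vector_mult.add_left)

lemma act_gone_plus: "act (gone + Z) x = x + thlin x Z"
  by (simp add: act_def gone_def thlin_def matrix_vector_mult_add_rdistrib)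

lemma linear_thlin: "linear (thlin p)"
  by (rule linearI) (simp_all add: thlin_def matrix_vector_mult.add_left matrix_vector_mult.scaleR_left
      scaleR_add_right)

lemma centralizer_transitive_displacement:
  assumes "centralizer_transitive B G" and "g \<in> G"
  shows "bform B (act g x - x) (act g x - x) = bform B (snd g) (snd g)"
proof -
  obtain h where h: "h \<in> Iso B" "gmul h g = gmul g h" "act h 0 = x"
    using assms unfolding centralizer_transitive_def by blast
  have "act g x - x = act h (act g 0) - act h 0"
    by (metis act_gmul h(2,3))
  also have "\<dots> = fst h *v snd g"
    by (simp add: act_def)
  finally show ?thesis
    using h(1) bform_isometry by (auto simp: Iso_def)
qed

lemma centralizer_transitive_fixes_all:
  assumes "centralizer_transitive B G" and "g \<in> G" and "act g p = p"
  shows "act g x = x"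
proof -
  obtain h where "gmul h g = gmul g h" and "act h p = x"
    using assms(1,2) unfolding centralizer_transitive_def by blast
  then show ?thesis
    by (metis act_gmul assms(3))
qed

lemma thinv_act:
  assumes "inj_on (\<lambda>g. act g p) G" and "h \<in> G"
  shows "thinv G p (act h p) = h"
  unfolding thinv_def using assms by (auto dest: inj_onD)

section \<open>Zariski closed subsets of the isometry group\<close>

lemma real_polynomial_function_poly_fun: "poly_fun f \<Longrightarrow> real_polynomial_function f"
  by (induction rule: poly_fun.induct) (auto intro: bounded_linear_inner_left)

lemma real_polynomial_function_zero_on_line:
  fixes f :: "'a::real_normed_vector \<Rightarrow> real"
  assumes f: "real_polynomial_function f" and zero: "\<And>k::nat. f (a + real k *\<^sub>R b) = 0"
  shows "f (a + t *\<^sub>R b) = 0"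
proof -
  have "polynomial_function (\<lambda>t::real. a + t *\<^sub>R b)"
    by (intro polynomial_function_add polynomial_function_mult polynomial_function_const
        polynomial_function_id)
  from real_polynomial_function_compose[OF this f]
  have "real_polynomial_function (\<lambda>t. f (a + t *\<^sub>R b))"
    by (simp add: o_def)
  then obtain c n where "(\<lambda>t. f (a + t *\<^sub>R b)) = (\<lambda>t. \<Sum>i\<le>n. c i * t ^ i)"
    unfolding real_polynomial_function_iff_sum by blast
  then have c: "f (a + t *\<^sub>R b) = (\<Sum>i\<le>n. c i * t ^ i)" for t
    by metis
  have "range real \<subseteq> {t. (\<Sum>i\<le>n. c i * t ^ i) = 0}"
    using zero c by auto
  moreover have "infinite (range (real :: nat \<Rightarrow> real))"
    using range_inj_infinite inj_of_nat by blast
  ultimately have "\<forall>i\<le>n. c i = 0"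
    using polyfun_finite_roots finite_subset by blast
  then show ?thesis
    by (simp add: c)
qed

lemma Iso_polynomial_zero_set:
  fixes B :: "real^'n::finite^'n"
  shows "\<exists>S. (\<forall>f\<in>S. real_polynomial_function f) \<and> Iso B = {h. \<forall>f\<in>S. f h = 0}"
proof -
  define eq where "eq i j (h :: 'n amat) = (transpose (fst h) ** B ** fst h) $ i $ j - B $ i $ j" for i j h
  have entry: "real_polynomial_function (\<lambda>h :: 'n amat. fst h $ k $ l)" for k l
    by (intro real_polynomial_function.intros(1) bounded_linear_compose[OF bounded_linear_vec_nth]
        bounded_linear_fst)
  have "real_polynomial_function (eq i j)" for i j
    unfolding eq_def matrix_matrix_mult_def transpose_def
    by (simp; intro real_polynomial_function_diff real_polynomial_function_sum finite
        real_polynomial_function.intros(2,4) entry)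
  moreover have "h \<in> Iso B \<longleftrightarrow> (\<forall>i j. eq i j h = 0)" for h
    by (cases h) (simp add: Iso_def eq_def vec_eq_iff)
  ultimately show ?thesis
    by (intro exI[of _ "range (case_prod eq)"]) auto
qed

lemma zariski_closed_in_Iso_line:
  assumes "zariski_closed_in_Iso B G" and "\<And>k::nat. a + real k *\<^sub>R b \<in> G"
  shows "a + t *\<^sub>R b \<in> G"
proof -
  obtain S where S: "\<forall>f\<in>S. poly_fun f" "G = {g \<in> Iso B. \<forall>f\<in>S. f g = 0}"
    using assms(1) unfolding zariski_closed_in_Iso_def by blast
  obtain T where T: "\<forall>f\<in>T. real_polynomial_function f" "Iso B = {h. \<forall>f\<in>T. f h = 0}"
    using Iso_polynomial_zero_set by blast
  have G_eq: "G = {h. \<forall>f\<in>S \<union> T. f h = 0}"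
    unfolding S(2) T(2) by blast
  have "f (a + t *\<^sub>R b) = 0" if "f \<in> S \<union> T" for f
  proof (rule real_polynomial_function_zero_on_line)
    show "real_polynomial_function f"
      using that S(1) T(1) real_polynomial_function_poly_fun by blast
    show "f (a + real k *\<^sub>R b) = 0" for k
      using that assms(2)[of k] by (simp add: G_eq)
  qed
  then show ?thesis
    by (simp add: G_eq)
qed

section \<open>Matrix inversion\<close>

lemma matrix_inv_unique:
  fixes A :: "'a::semiring_1^'n^'n"
  assumes "A ** A' = mat 1" and "A' ** A = mat 1"
  shows "matrix_inv A = A'"
proof -
  have "matrix_inv A ** A = mat 1"
    unfolding matrix_inv_def by (rule someI2[of _ A']) (use assms in blast)+
  then have "A' = (matrix_inv A ** A) ** A'"
    by simp
  also have "\<dots> = matrix_inv A"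
    by (simp add: assms(1) flip: matrix_mul_assoc)
  finally show ?thesis
    by simp
qed

text \<open>The transpose of the cofactor matrix, written as in Cramer's rule.\<close>

definition adjugate :: "real^'n::finite^'n \<Rightarrow> real^'n^'n" where
  "adjugate A = (\<chi> j k. det (\<chi> i l. if l = j then axis k 1 $ i else A $ i $ l))"

lemma matrix_inv_adjugate:
  fixes A :: "real^'n::finite^'n"
  assumes "det A \<noteq> 0"
  shows "matrix_inv A = (1 / det A) *\<^sub>R adjugate A"
proof -
  obtain A' where A': "A ** A' = mat 1" "A' ** A = mat 1"
    using assms invertible_det_nz invertible_def by blast
  have "matrix_inv A $ j $ k = det (\<chi> i l. if l = j then axis k 1 $ i else A $ i $ l) / det A" for j k
  proof -
    have "A *v (matrix_inv A *v axis k 1) = axis k 1"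
      by (simp add: matrix_inv_unique[OF A'] matrix_vector_mul_assoc A'(1))
    then have "(matrix_inv A *v axis k 1) $ j = det (\<chi> i l. if l = j then axis k 1 $ i else A $ i $ l) / det A"
      using cramer[OF assms] by simp
    then show ?thesis
      by (simp add: matrix_vector_mult_basis column_def)
  qed
  then show ?thesis
    by (simp add: adjugate_def vec_eq_iff)
qed

lemma polynomial_function_matrix:
  fixes f :: "'a::real_normed_vector \<Rightarrow> real^'n::finite^'m::finite"
  assumes "\<And>i j. real_polynomial_function (\<lambda>x. f x $ i $ j)"
  shows "polynomial_function f"
  unfolding polynomial_function_iff_Basis_inner
  using assms by (auto simp: Basis_vec_def inner_axis)

lemma real_polynomial_function_det:
  fixes F :: "'a::real_normed_vector \<Rightarrow> real^'n::finite^'n"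
  assumes "\<And>i j. real_polynomial_function (\<lambda>x. F x $ i $ j)"
  shows "real_polynomial_function (\<lambda>x. det (F x))"
  unfolding det_def
  by (intro real_polynomial_function_sum finite_permutations finite real_polynomial_function_prod
      real_polynomial_function.intros(2,4) assms)

lemma real_polynomial_function_matrix_entry:
  "real_polynomial_function (\<lambda>A::real^'n::finite^'m::finite. A $ i $ j)"
  by (intro real_polynomial_function.intros(1) bounded_linear_compose[OF bounded_linear_vec_nth]
      bounded_linear_vec_nth)

lemma matrix_inv_differentiable:
  fixes M :: "real^'n::finite^'n"
  assumes "invertible M"
  shows "matrix_inv differentiable (at M)"
proof -
  have det: "real_polynomial_function (\<lambda>A::real^'n^'n. det A)"
    using real_polynomial_function_det[of "\<lambda>A. A"] real_polynomial_function_matrix_entry by blast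
  have "real_polynomial_function (\<lambda>A::real^'n^'n. adjugate A $ j $ k)" for j k
    unfolding adjugate_def vec_lambda_beta
  proof (rule real_polynomial_function_det)
    show "real_polynomial_function (\<lambda>A. (\<chi> i l. if l = j then axis k 1 $ i else A $ i $ l) $ i $ l)"
      for i l
      by (cases "l = j") (simp_all add: real_polynomial_function_matrix_entry real_polynomial_function.intros(2))
  qed
  then have "polynomial_function (adjugate :: real^'n^'n \<Rightarrow> _)"
    by (rule polynomial_function_matrix)
  then have "adjugate differentiable (at M)"
    by (rule differentiable_at_polynomial_function)
  moreover have "(\<lambda>A. 1 / det A) differentiable (at M)"
    using assms det
    by (intro differentiable_divide differentiable_const differentiable_at_real_polynomial_function)
      (auto simp: invertible_det_nz)
  ultimately have "(\<lambda>A. (1 / det A) *\<^sub>R adjugate A) differentiable (at M)"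
    by (simp only: differentiable_scaleR)
  moreover have "open {A::real^'n^'n. det A \<noteq> 0}"
    using continuous_real_polymonial_function[OF det]
    by (intro open_Collect_neq continuous_on_const) (simp add: continuous_at_imp_continuous_on)
  ultimately show ?thesis
    using assms has_derivative_transform_within_open[of _ _ M UNIV "{A. det A \<noteq> 0}" matrix_inv]
    by (metis (mono_tags) differentiable_def invertible_det_nz matrix_inv_adjugate mem_Collect_eq)
qed

lemma unipotent_matrix_inverse:
  fixes A :: "real^'n::finite^'n"
  assumes "A ** A = 0"
  shows "(mat 1 + A) ** (mat 1 - A) = mat 1" and "(mat 1 - A) ** (mat 1 + A) = mat 1"
  using assms by (simp_all add: matrix_mult.add_left matrix_mult.diff_left matrix_mult.add_right
      matrix_mult.diff_right)

lemma ginv_unipotent: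
  assumes "tprod N N = 0"
  shows "ginv (gone + N) = gone - N"
proof -
  obtain A v where N: "N = (A, v)" and "A ** A = 0" and Av: "A *v v = 0"
    using assms by (cases N) (simp add: tprod_self_eq_0_iff)
  then have "matrix_inv (mat 1 + A) = mat 1 - A"
    using matrix_inv_unique unipotent_matrix_inverse by blast
  then show ?thesis
    by (simp add: ginv_def gone_def N matrix_vector_mult_diff_rdistrib Av)
qed

lemma invertible_unipotent:
  assumes "tprod N N = 0"
  shows "invertible (fst (gone + N))"
  using assms unipotent_matrix_inverse[of "fst N"]
  by (auto simp: invertible_def gone_def tprod_self_eq_0_iff)

lemma tprod_unipotent_inverse:
  assumes "tprod N N = 0"
  shows "tprod (gone + N) (tprod (gone - N) Z) = Z"
proof -
  have "tprod N (tprod N Z) = 0"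
    by (simp add: assms flip: tprod_assoc)
  then show ?thesis
    by (simp add: tprod.add_left tprod.diff_left tprod.diff_right)
qed

lemma ginv_differentiable:
  assumes "invertible (fst g)"
  shows "ginv differentiable (at g)"
proof -
  obtain Mi' where "(matrix_inv has_derivative Mi') (at (fst g))"
    using matrix_inv_differentiable[OF assms] differentiable_def by blast
  from has_derivative_compose[OF has_derivative_fst[OF has_derivative_ident] this]
  have inv: "((\<lambda>h. matrix_inv (fst h)) has_derivative (\<lambda>k. Mi' (fst k))) (at g)" .
  have "(ginv has_derivative (\<lambda>k. (Mi' (fst k),
      - (matrix_inv (fst g) *v snd k + Mi' (fst k) *v snd g)))) (at g)"
    unfolding ginv_def[abs_def]
    by (intro has_derivative_Pair has_derivative_minus inv
        matrix_vector_mult.FDERIV[OF inv has_derivative_snd[OF has_derivative_ident]])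
  then show ?thesis
    by (rule differentiableI)
qed

section \<open>Derivatives along lines and in subspaces\<close>

lemma has_vector_derivative_in_subspace:
  fixes f :: "real \<Rightarrow> 'a::euclidean_space"
  assumes S: "subspace S" and f: "\<And>t. f t \<in> S" and D: "(f has_vector_derivative D) (at 0)"
  shows "D \<in> S"
proof -
  obtain y z where y: "y \<in> span S" and z: "\<And>w. w \<in> span S \<Longrightarrow> orthogonal z w" and Dyz: "D = y + z"
    using orthogonal_subspace_decomp_exists[of S D] by metis
  have "((\<lambda>t. z \<bullet> f t) has_vector_derivative z \<bullet> D) (at 0)"
    using bounded_linear.has_vector_derivative[OF bounded_linear_inner_right D] .
  moreover have "z \<bullet> f t = 0" for t
    using z[OF span_base[OF f]] by (simp add: orthogonal_def)
  then have "((\<lambda>t. z \<bullet> f t) has_vector_derivative 0) (at 0)"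
    by simp
  ultimately have "z \<bullet> D = 0"
    by (rule vector_derivative_unique_at)
  moreover have "z \<bullet> y = 0"
    using z y by (simp add: orthogonal_def)
  ultimately have "z = 0"
    using Dyz by (simp add: inner_add_right)
  then show ?thesis
    using Dyz y by (simp add: span_eq_iff[THEN iffD2, OF S])
qed

lemma has_derivative_along_line:
  assumes "(H has_derivative H') (at x)"
  shows "((\<lambda>t. H (x + t *\<^sub>R v)) has_vector_derivative H' v) (at 0)"
proof -
  have "((\<lambda>t. x + t *\<^sub>R v) has_derivative (\<lambda>t. t *\<^sub>R v)) (at 0)"
    by (auto intro!: derivative_eq_intros)
  from diff_chain_at[OF this] assms
  have "((\<lambda>t. H (x + t *\<^sub>R v)) has_derivative (\<lambda>t. H' (t *\<^sub>R v))) (at 0)"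
    by (simp add: o_def)
  then show ?thesis
    using has_derivative_bounded_linear[OF assms]
    by (simp add: has_vector_derivative_def linear_simps)
qed

section \<open>The Lie algebra of \<open>G\<close>\<close>

locale transitive_centralizer_group =
  fixes B :: "real^'n::finite^'n" and G :: "'n amat set"
  assumes nondeg: "nondeg_sym_form B"
    and subgroup: "subgroup_Iso B G"
    and zariski_closed: "zariski_closed_in_Iso B G"
    and transitive: "centralizer_transitive B G"
begin

text \<open>The set \<open>G - 1\<close>; by \<open>TG_eq\<close> it is the tangent space of \<open>G\<close> at every point.\<close>

definition lie_algebra :: "'n amat set" where
  "lie_algebra = {Z. gone + Z \<in> G}"

lemma mem_G_iff: "g \<in> G \<longleftrightarrow> g - gone \<in> lie_algebra"
  by (simp add: lie_algebra_def)

lemma square_zero: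
  assumes "Z \<in> lie_algebra"
  shows "tprod Z Z = 0"
proof -
  obtain A v where Z: "Z = (A, v)"
    by (cases Z)
  have g: "gone + Z \<in> G"
    using assms by (simp add: lie_algebra_def)
  then have "transpose (mat 1 + A) ** B ** (mat 1 + A) = B"
    using subgroup by (auto simp: subgroup_Iso_def Iso_def gone_def Z)
  moreover have "bform B (A *v x + v) (A *v x + v) = bform B v v" for x
    using centralizer_transitive_displacement[OF transitive g, of x]
    unfolding act_gone_plus by (simp add: thlin_def Z gone_def)
  ultimately have "A ** A = 0" and "A *v v = 0"
    using isometry_constant_displacement_square_zero[OF nondeg] by blast+
  then show ?thesis
    by (simp add: Z tprod_self_eq_0_iff)
qed

lemma zero_mem: "0 \<in> lie_algebra"
  using subgroup by (simp add: lie_algebra_def subgroup_Iso_def)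

lemma mult_closed:
  assumes "Z \<in> lie_algebra" and "W \<in> lie_algebra"
  shows "Z + W + tprod Z W \<in> lie_algebra"
proof -
  have "gmul (gone + Z) (gone + W) = gone + (Z + W + tprod Z W)"
    by (simp add: gmul_def gone_def tprod_def matrix_mult.add_left matrix_mult.add_right
        matrix_vector_mult.add_left matrix_vector_mult.add_right prod_eq_iff algebra_simps)
  then show ?thesis
    using assms subgroup by (metis lie_algebra_def mem_Collect_eq subgroup_Iso_def)
qed

lemma scaleR_closed:
  assumes "Z \<in> lie_algebra"
  shows "t *\<^sub>R Z \<in> lie_algebra"
proof -
  have "real k *\<^sub>R Z \<in> lie_algebra" for k
  proof (induction k)
    case 0
    show ?case
      using zero_mem by simp
  next
    case (Suc k)
    have "tprod (real k *\<^sub>R Z) Z = 0"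
      using square_zero[OF assms] by (simp add: tprod.scaleR_left)
    then show ?case
      using mult_closed[OF Suc assms] by (simp add: algebra_simps)
  qed
  txt \<open>These are the points \<open>(1 + Z)\<^sup>k\<close>, and \<open>G\<close> is Zariski closed.\<close>
  then show ?thesis
    using zariski_closed_in_Iso_line[OF zariski_closed, of gone Z]
    by (simp add: lie_algebra_def)
qed

text \<open>Expand \<open>E\<^sup>2 = 0\<close> for \<open>1 + E = (1 + Z) (1 + t W)\<close> at \<open>t = \<plusminus>1\<close>.\<close>

lemma anticommute_sum:
  assumes Z: "Z \<in> lie_algebra" and W: "W \<in> lie_algebra"
  shows "tprod Z W + tprod W Z = 0" and "tprod (tprod Z W) Z = 0"
proof -
  let ?P = "tprod Z W"
  let ?Q = "?P + tprod W Z + tprod ?P Z" and ?R = "tprod W ?P + tprod ?P ?P"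
  have ZZ: "tprod Z Z = 0" and WW: "tprod W W = 0"
    using square_zero Z W by blast+
  have ZP: "tprod Z ?P = 0"
    by (simp add: ZZ flip: tprod_assoc)
  have PW: "tprod ?P W = 0"
    by (simp add: WW tprod_assoc)
  have expand: "tprod (Z + t *\<^sub>R W + t *\<^sub>R ?P) (Z + t *\<^sub>R W + t *\<^sub>R ?P)
      = t *\<^sub>R ?Q + (t * t) *\<^sub>R ?R" for t
    by (simp add: tprod.add_left tprod.add_right tprod.scaleR_left tprod.scaleR_right ZZ WW ZP PW
        scaleR_add_right)
  have vanish: "tprod (Z + t *\<^sub>R W + t *\<^sub>R ?P) (Z + t *\<^sub>R W + t *\<^sub>R ?P) = 0" for t
    using square_zero mult_closed[OF Z scaleR_closed[OF W, of t]]
    by (simp add: tprod.scaleR_right)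
  have "?Q + ?R = 0" and "- ?Q + ?R = 0"
    using expand[of 1] vanish[of 1] expand[of "- 1"] vanish[of "- 1"] by simp_all
  then have "2 *\<^sub>R ?Q = 0"
    by (simp add: add.commute add_eq_0_iff2 scaleR_2)
  then have Q: "?Q = 0"
    by simp
  have "tprod ?Q Z = tprod ?P Z"
    by (simp add: tprod.add_left tprod_assoc ZZ)
  then show PZ: "tprod ?P Z = 0"
    using Q by simp
  show "tprod Z W + tprod W Z = 0"
    using Q PZ by simp
qed

lemma add_closed:
  assumes Z: "Z \<in> lie_algebra" and W: "W \<in> lie_algebra"
  shows "Z + W \<in> lie_algebra"
proof -
  txt \<open>\<open>1 + Z + W = (1 + Z/2) (1 + W) (1 + Z/2)\<close>.\<close>
  let ?H = "(1/2) *\<^sub>R Z"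
  let ?U = "?H + W + tprod ?H W"
  have H: "?H \<in> lie_algebra"
    using scaleR_closed[OF Z] .
  have "?U + ?H + tprod ?U ?H \<in> lie_algebra"
    using mult_closed[OF mult_closed[OF H W] H] .
  moreover have "?U + ?H + tprod ?U ?H = Z + W + (1/2) *\<^sub>R (tprod Z W + tprod W Z)"
    using square_zero[OF Z] anticommute_sum(2)[OF Z W]
    by (simp add: tprod.add_left tprod.scaleR_left tprod.scaleR_right
        scaleR_add_right flip: scaleR_add_left)
  ultimately show ?thesis
    using anticommute_sum(1)[OF Z W] by simp
qed

lemma subspace_lie_algebra: "subspace lie_algebra"
  unfolding subspace_def using zero_mem add_closed scaleR_closed by blast

lemma tprod_closed:
  assumes "Z \<in> lie_algebra" and "W \<in> lie_algebra"
  shows "tprod Z W \<in> lie_algebra"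
proof -
  have "(Z + W + tprod Z W) - (Z + W) \<in> lie_algebra"
    using assms mult_closed add_closed subspace_diff[OF subspace_lie_algebra] by blast
  then show ?thesis
    by simp
qed

lemma anticommute:
  assumes "Z \<in> lie_algebra" and "W \<in> lie_algebra"
  shows "tprod W Z = - tprod Z W"
  using anticommute_sum(1)[OF assms] by (simp add: add_eq_0_iff)

lemma triple_product_zero:
  assumes P: "P \<in> lie_algebra" and Q: "Q \<in> lie_algebra" and R: "R \<in> lie_algebra"
  shows "tprod (tprod P Q) R = 0"
proof -
  txt \<open>Moving \<open>R\<close> across by anticommutativity and associativity reverses the sign.\<close>
  have "tprod (tprod P Q) R = - tprod R (tprod P Q)"
    using anticommute[OF tprod_closed[OF P Q] R] by simp
  also have "\<dots> = tprod (tprod P R) Q"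
    using anticommute[OF R P] by (simp add: tprod.minus_left flip: tprod_assoc)
  also have "\<dots> = - tprod (tprod P Q) R"
    using anticommute[OF Q R] by (simp add: tprod.minus_right tprod_assoc)
  finally have "tprod (tprod P Q) R + tprod (tprod P Q) R = tprod (tprod P Q) R + - tprod (tprod P Q) R"
    by (rule arg_cong)
  then have "2 *\<^sub>R tprod (tprod P Q) R = 0"
    by (simp add: scaleR_2)
  then show ?thesis
    by simp
qed

lemma bracket_unipotent_translate:
  assumes N: "N \<in> lie_algebra" and X: "X \<in> lie_algebra" and Y: "Y \<in> lie_algebra"
  shows "bracket (tprod (gone - N) X) (tprod (gone - N) Y) = 2 *\<^sub>R tprod X Y"
proof -
  have "tprod X (tprod N Y) = 0" "tprod (tprod N X) Y = 0" "tprod (tprod N X) (tprod N Y) = 0"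
    "tprod Y (tprod N X) = 0" "tprod (tprod N Y) X = 0" "tprod (tprod N Y) (tprod N X) = 0"
    using triple_product_zero tprod_closed N X Y by (simp_all flip: tprod_assoc)
  then show ?thesis
    using anticommute[OF X Y]
    by (simp add: bracket_def tprod.diff_left tprod.diff_right scaleR_2)
qed

lemma thlin_eq_0:
  assumes "Z \<in> lie_algebra" and "thlin p Z = 0"
  shows "Z = 0"
proof -
  have "gone + Z \<in> G" and "act (gone + Z) p = p"
    using assms by (simp_all add: lie_algebra_def act_gone_plus)
  then have "act (gone + Z) x = x" for x
    by (rule centralizer_transitive_fixes_all[OF transitive])
  then have affine_zero: "fst Z *v x + snd Z = 0" for x
    by (simp add: act_gone_plus thlin_def)
  then have "snd Z = 0"
    using affine_zero[of 0] by simp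
  moreover have "fst Z *v x = 0" for x
    using affine_zero[of x] calculation by simp
  ultimately show ?thesis
    by (simp add: prod_eq_iff matrix_eq)
qed

section \<open>The orbit map\<close>

lemma line_in_G:
  assumes "g \<in> G" and "Z \<in> lie_algebra"
  shows "g + t *\<^sub>R Z \<in> G"
  using add_closed[of "g - gone" "t *\<^sub>R Z"] scaleR_closed assms
  by (simp add: mem_G_iff algebra_simps)

lemma TG_eq:
  assumes "g \<in> G"
  shows "TG G g = lie_algebra"
proof
  show "TG G g \<subseteq> lie_algebra"
  proof
    fix Z assume "Z \<in> TG G g"
    then obtain \<gamma> where \<gamma>: "\<And>t. \<gamma> t \<in> G" "(\<gamma> has_vector_derivative Z) (at 0)"
      unfolding TG_def by blast
    have "\<gamma> t - gone \<in> lie_algebra" for t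
      using \<gamma>(1) mem_G_iff by blast
    moreover have "((\<lambda>t. \<gamma> t - gone) has_vector_derivative Z) (at 0)"
      using has_vector_derivative_diff[OF \<gamma>(2) has_vector_derivative_const] by simp
    ultimately show "Z \<in> lie_algebra"
      by (rule has_vector_derivative_in_subspace[OF subspace_lie_algebra])
  qed
  show "lie_algebra \<subseteq> TG G g"
  proof
    fix Z assume "Z \<in> lie_algebra"
    moreover have "((\<lambda>t. g + t *\<^sub>R Z) has_vector_derivative Z) (at 0)"
      by (auto intro!: derivative_eq_intros)
    ultimately show "Z \<in> TG G g"
      unfolding TG_def using line_in_G assms by (intro CollectI exI[of _ "\<lambda>t. g + t *\<^sub>R Z"]) auto
  qed
qed

lemma act_G: "g \<in> G \<Longrightarrow> act g p = p + thlin p (g - gone)"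
  using act_add[of gone "g - gone"] by (simp add: act_def gone_def)

lemma orbit_eq: "orbit G p = (\<lambda>Z. p + thlin p Z) ` lie_algebra"
proof -
  have G_eq: "G = (\<lambda>Z. gone + Z) ` lie_algebra"
  proof (intro set_eqI iffI)
    show "g \<in> (\<lambda>Z. gone + Z) ` lie_algebra" if "g \<in> G" for g
      using that by (intro image_eqI[of _ _ "g - gone"]) (simp_all add: mem_G_iff)
  qed (auto simp: lie_algebra_def)
  have "orbit G p = (\<lambda>Z. act (gone + Z) p) ` lie_algebra"
    unfolding orbit_def by (subst (1) G_eq) (simp add: image_image)
  then show ?thesis
    by (simp add: act_gone_plus)
qed

lemma inj_on_thlin: "inj_on (thlin p) lie_algebra"
  using linear_inj_on_iff_eq_0[OF linear_thlin subspace_lie_algebra] thlin_eq_0 by blast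

lemma affine_orbit: "affine (orbit G p)"
proof -
  have "subspace (thlin p ` lie_algebra)"
    by (rule linear_subspace_image[OF linear_thlin subspace_lie_algebra])
  then have "affine ((+) p ` thlin p ` lie_algebra)"
    using affine_translation subspace_imp_affine by blast
  then show ?thesis
    by (simp add: orbit_eq image_image)
qed

lemma inj_on_orbit_map: "inj_on (\<lambda>g. act g p) G"
proof (rule inj_onI)
  fix g h assume g: "g \<in> G" and h: "h \<in> G" and "act g p = act h p"
  then have "thlin p (g - gone) = thlin p (h - gone)"
    by (simp add: act_G)
  then have "g - gone = h - gone"
    using inj_onD[OF inj_on_thlin] g h mem_G_iff by blast
  then show "g = h"
    by simp
qed

lemma thlin_image: "thlin p ` lie_algebra = {x - y | x y. x \<in> orbit G p \<and> y \<in> orbit G p}"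
proof (intro set_eqI iffI)
  fix w assume "w \<in> thlin p ` lie_algebra"
  then obtain Z where "Z \<in> lie_algebra" and "w = (p + thlin p Z) - (p + thlin p 0)"
    by (auto simp: linear_0[OF linear_thlin])
  then show "w \<in> {x - y | x y. x \<in> orbit G p \<and> y \<in> orbit G p}"
    using zero_mem unfolding orbit_eq by blast
next
  fix w assume "w \<in> {x - y | x y. x \<in> orbit G p \<and> y \<in> orbit G p}"
  then obtain Z W where "Z \<in> lie_algebra" "W \<in> lie_algebra" and "w = thlin p (Z - W)"
    unfolding orbit_eq by (auto simp: linear_diff[OF linear_thlin])
  then show "w \<in> thlin p ` lie_algebra"
    using subspace_diff[OF subspace_lie_algebra] by blast
qed

section \<open>The two connections\<close>

lemma derivative_along_G_mem:
  assumes g: "g \<in> G" and X: "X \<in> lie_algebra" and Y': "(Y has_derivative Y') (at g)"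
    and Y: "\<And>h. h \<in> G \<Longrightarrow> Y h \<in> lie_algebra"
  shows "Y' X \<in> lie_algebra"
  using has_vector_derivative_in_subspace[OF subspace_lie_algebra _ has_derivative_along_line[OF Y']]
    Y line_in_G[OF g X] by blast

lemma nabla_pull_eq_derivative:
  assumes g: "g \<in> G" and X: "X g \<in> lie_algebra" and Y': "(Y has_derivative Y') (at g)"
    and Y: "\<And>h. h \<in> G \<Longrightarrow> Y h \<in> lie_algebra"
  shows "nabla_pull G p X Y g = Y' (X g)"
proof -
  txt \<open>Since \<open>G\<close> is affine, \<open>\<theta>\<^sup>-\<^sup>1\<close> of the line through \<open>\<theta> g\<close> in direction \<open>d\<theta> (X g)\<close> is the
    line \<open>g + t X g\<close>.\<close>
  have "act (g + t *\<^sub>R X g) p = act g p + t *\<^sub>R thlin p (X g)" for t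
    by (simp add: act_add linear_scale[OF linear_thlin])
  then have thinv_line: "thinv G p (act g p + t *\<^sub>R thlin p (X g)) = g + t *\<^sub>R X g" for t
    using thinv_act[OF inj_on_orbit_map line_in_G[OF g X]] by metis
  have "((\<lambda>t. thlin p (Y (g + t *\<^sub>R X g))) has_vector_derivative thlin p (Y' (X g))) (at 0)"
    using linear_thlin linear_conv_bounded_linear bounded_linear.has_vector_derivative
      has_derivative_along_line[OF Y'] by blast
  then have D: "vector_derivative (\<lambda>t. thlin p (Y (thinv G p (act g p + t *\<^sub>R thlin p (X g))))) (at 0)
      = thlin p (Y' (X g))"
    by (simp add: thinv_line vector_derivative_at)
  have mem: "Y' (X g) \<in> lie_algebra"
    using derivative_along_G_mem[OF g X Y' Y] .
  show ?thesis
    unfolding nabla_pull_def D TG_eq[OF g]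
  proof (rule the_equality)
    show "Y' (X g) \<in> lie_algebra \<and> thlin p (Y' (X g)) = thlin p (Y' (X g))"
      using mem by simp
    show "Z = Y' (X g)" if "Z \<in> lie_algebra \<and> thlin p Z = thlin p (Y' (X g))" for Z
      using that mem inj_onD[OF inj_on_thlin] by blast
  qed
qed

lemma nabla0_eq_derivative:
  assumes g: "g \<in> G" and X: "X g \<in> lie_algebra" and Y': "(Y has_derivative Y') (at g)"
    and Y: "\<And>h. h \<in> G \<Longrightarrow> Y h \<in> lie_algebra"
  shows "nabla0 X Y g = Y' (X g)"
proof -
  define N where "N = g - gone"
  have N: "N \<in> lie_algebra" and g_eq: "g = gone + N"
    using g by (simp_all add: N_def mem_G_iff)
  txt \<open>On the line \<open>g + t X g\<close>, which stays in \<open>G\<close>, the inverse is explicit.\<close>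
  have ginv_line: "ginv (g + t *\<^sub>R X g) = gone - N - t *\<^sub>R X g" for t
    using ginv_unipotent[OF square_zero[OF add_closed[OF N scaleR_closed[OF X]]]]
    by (simp add: g_eq add.assoc)
  obtain Ginv' where "(ginv has_derivative Ginv') (at g)"
    using ginv_differentiable invertible_unipotent[OF square_zero[OF N]] g_eq
    by (metis differentiable_def)
  from tprod.FDERIV[OF this Y']
  have F: "((\<lambda>h. lmul (ginv h) (Y h)) has_derivative
      (\<lambda>k. tprod (ginv g) (Y' k) + tprod (Ginv' k) (Y g))) (at g)"
    by (simp add: lmul_eq_tprod)
  have "((\<lambda>t. lmul (ginv (g + t *\<^sub>R X g)) (Y (g + t *\<^sub>R X g))) has_vector_derivative
      frechet_derivative (\<lambda>h. lmul (ginv h) (Y h)) (at g) (X g)) (at 0)"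
    using has_derivative_along_line[OF F] by (simp add: frechet_derivative_at[OF F, symmetric])
  moreover have "((\<lambda>t. lmul (ginv (g + t *\<^sub>R X g)) (Y (g + t *\<^sub>R X g))) has_vector_derivative
      tprod (gone - N) (Y' (X g)) - tprod (X g) (Y g)) (at 0)"
  proof -
    have "((\<lambda>t. gone - N - t *\<^sub>R X g) has_vector_derivative - X g) (at 0)"
      by (auto intro!: derivative_eq_intros)
    from tprod.has_vector_derivative[OF this has_derivative_along_line[OF Y']]
    show ?thesis
      by (simp add: ginv_line lmul_eq_tprod tprod.minus_left)
  qed
  ultimately have F_X: "frechet_derivative (\<lambda>h. lmul (ginv h) (Y h)) (at g) (X g)
      = tprod (gone - N) (Y' (X g)) - tprod (X g) (Y g)"
    by (rule vector_derivative_unique_at)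
  have "nabla0 X Y g = tprod (gone + N) (tprod (gone - N) (Y' (X g)) - tprod (X g) (Y g)
      + (1/2) *\<^sub>R bracket (tprod (gone - N) (X g)) (tprod (gone - N) (Y g)))"
    unfolding nabla0_def F_X using ginv_unipotent[OF square_zero[OF N]]
    by (simp add: g_eq lmul_eq_tprod)
  also have "\<dots> = Y' (X g)"
    using bracket_unipotent_translate[OF N X Y[OF g]] tprod_unipotent_inverse[OF square_zero[OF N]]
    by simp
  finally show ?thesis .
qed

lemma nabla_pull_eq_nabla0:
  assumes "vector_field G X" and "vector_field G Y" and "g \<in> G"
  shows "nabla_pull G p X Y g = nabla0 X Y g"
proof -
  obtain Y' where "(Y has_derivative Y') (at g)"
    using assms(2,3) by (auto simp: vector_field_def differentiable_def)
  moreover have "X g \<in> lie_algebra" and "\<And>h. h \<in> G \<Longrightarrow> Y h \<in> lie_algebra"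
    using assms TG_eq by (auto simp: vector_field_def)
  ultimately show ?thesis
    using nabla_pull_eq_derivative nabla0_eq_derivative assms(3) by simp
qed

end

theorem proposition4p4:
  fixes B :: "real^'n^'n" and G :: "'n amat set" and p :: "real^'n"
  assumes "nondeg_sym_form B"
    and "subgroup_Iso B G"
    and "zariski_closed_in_Iso B G"
    and "centralizer_transitive B G"
  shows "affine (orbit G p)
    \<and> bij_betw (\<lambda>g. act g p) G (orbit G p)
    \<and> (\<forall>g\<in>G. inj_on (thlin p) (TG G g) \<and>
          thlin p ` TG G g = {x - y | x y. x \<in> orbit G p \<and> y \<in> orbit G p})
    \<and> (\<forall>X Y. vector_field G X \<longrightarrow> vector_field G Y \<longrightarrow>
          (\<forall>g\<in>G. nabla_pull G p X Y g = nabla0 X Y g))"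
proof -
  interpret transitive_centralizer_group B G
    using assms by unfold_locales
  have "bij_betw (\<lambda>g. act g p) G (orbit G p)"
    using inj_on_orbit_map by (simp add: bij_betw_def orbit_def)
  then show ?thesis
    using affine_orbit TG_eq inj_on_thlin thlin_image nabla_pull_eq_nabla0 by simp
qed

end
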